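(* Let $m\geq 2$. Up to isomorphism, $\operatorname{Turan}(2m+2, m+1)$ is the unique connected graph with parameters $\bigl(2m, 4\binom{m}{2}\bigr)$.
   Context: All graphs are finite, simple and undirected. The $K_3$-degree of a vertex $v$ is the number of triangles containing $v$. A graph $G$ has parameters $(r_2,r_3)$ if every vertex has degree $r_2$ and every vertex has $K_3$-degree $r_3$. For $r\mid n$, $\operatorname{Turan}(n,r)$ is the complete multipartite graph on $n$ vertices with $r$ parts each of size $n/r$; thus $\operatorname{Turan}(2m+2,m+1)$ is the complete multipartite graph with $m+1$ parts of size $2$. *)

theory Defs
  imports Main
begin

definition simple_graph :: "'a set \<Rightarrow> ('a \<Rightarrow> 'a \<Rightarrow> bool) \<Rightarrow> bool" where
  "simple_graph V E \<longleftrightarrow> finite V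
     \<and> (\<forall>x y. E x y \<longrightarrow> x \<in> V \<and> y \<in> V)
     \<and> (\<forall>x y. E x y \<longrightarrow> E y x)
     \<and> (\<forall>x. \<not> E x x)"

definition degree :: "'a set \<Rightarrow> ('a \<Rightarrow> 'a \<Rightarrow> bool) \<Rightarrow> 'a \<Rightarrow> nat" where
  "degree V E v = card {u \<in> V. E v u}"

definition triangles :: "'a set \<Rightarrow> ('a \<Rightarrow> 'a \<Rightarrow> bool) \<Rightarrow> 'a set set" where
  "triangles V E = {T. T \<subseteq> V \<and> card T = 3 \<and> (\<forall>x\<in>T. \<forall>y\<in>T. x \<noteq> y \<longrightarrow> E x y)}"

definition k3_degree :: "'a set \<Rightarrow> ('a \<Rightarrow> 'a \<Rightarrow> bool) \<Rightarrow> 'a \<Rightarrow> nat" where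
  "k3_degree V E v = card {T \<in> triangles V E. v \<in> T}"

definition has_parameters :: "'a set \<Rightarrow> ('a \<Rightarrow> 'a \<Rightarrow> bool) \<Rightarrow> nat \<Rightarrow> nat \<Rightarrow> bool" where
  "has_parameters V E r2 r3 \<longleftrightarrow>
     (\<forall>v\<in>V. degree V E v = r2 \<and> k3_degree V E v = r3)"

definition connected_graph :: "'a set \<Rightarrow> ('a \<Rightarrow> 'a \<Rightarrow> bool) \<Rightarrow> bool" where
  "connected_graph V E \<longleftrightarrow> V \<noteq> {} \<and> (\<forall>x\<in>V. \<forall>y\<in>V. E\<^sup>*\<^sup>* x y)"

definition graph_iso ::
  "'a set \<Rightarrow> ('a \<Rightarrow> 'a \<Rightarrow> bool) \<Rightarrow> 'b set \<Rightarrow> ('b \<Rightarrow> 'b \<Rightarrow> bool) \<Rightarrow> bool" where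
  "graph_iso V E W F \<longleftrightarrow>
     (\<exists>f. bij_betw f V W \<and> (\<forall>x\<in>V. \<forall>y\<in>V. E x y \<longleftrightarrow> F (f x) (f y)))"

text \<open>Turan(n,r) for r dividing n: vertices 0..n-1, parts are residue classes mod r
(each of size n/r); two vertices adjacent iff they lie in different parts.\<close>

definition turan_V :: "nat \<Rightarrow> nat \<Rightarrow> nat set" where
  "turan_V n r = {0..<n}"

definition turan_E :: "nat \<Rightarrow> nat \<Rightarrow> nat \<Rightarrow> nat \<Rightarrow> bool" where
  "turan_E n r x y \<longleftrightarrow> x < n \<and> y < n \<and> x mod r \<noteq> y mod r"

end

theory Submission
  imports Defs
begin

text \<open>Write N(x) = \<open>nbhd x\<close> and N[x] = \<open>cnbhd x\<close>. In a 2m-regular graph,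
  double counting the triangles at v shows that v lies in 4 (m choose 2) triangles
  iff the excesses |N[v] - N[u]| over the 2m neighbours u of v add up to 2m.
  A largest class of vertices sharing one closed neighbourhood would push this sum
  below 2m, so there are no such twins, and then every excess is exactly 1. If
  N[u] - N[v] = {w} for an edge uv, then all of N[u] but v lies in N[w]; from this
  one finds a vertex w outside N[v] with N(w) = N(v), and connectivity forces
  V = N[v] \<union> {w}. Hence every vertex has exactly one non-neighbour: the graph is
  K(2m+2) minus a perfect matching, which is Turan(2m+2, m+1).\<close>

lemma card_1_eq_singleton: "card A = 1 \<Longrightarrow> a \<in> A \<Longrightarrow> A = {a}"
  by (auto simp: card_1_singleton_iff)

lemma le_1_if_double_mult_le:
  fixes k t :: nat
  assumes "2 \<le> k" "2 * (k * t) + 1 \<le> 2 * k + t"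
  shows "t \<le> 1"
proof (rule ccontr)
  assume "\<not> t \<le> 1"
  then have "k * 2 \<le> k * t" "2 * t \<le> k * t"
    using assms(1) by (simp_all add: mult_le_mono1)
  with assms(2) show False
    by linarith
qed

lemma four_choose_two: "4 * (m choose 2) = 2 * (m * (m - 1))"
proof -
  have "even (m * (m - 1))"
    by auto
  then show ?thesis
    unfolding choose_two by (metis dvd_mult_div_cancel mult.assoc mult_2 numeral_Bit0_eq_double)
qed

locale sgraph =
  fixes V :: "'a set" and E :: "'a \<Rightarrow> 'a \<Rightarrow> bool"
  assumes simple: "simple_graph V E"
begin

definition nbhd :: "'a \<Rightarrow> 'a set" where
  "nbhd x = {u \<in> V. E x u}"

definition cnbhd :: "'a \<Rightarrow> 'a set" where
  "cnbhd x = insert x (nbhd x)"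

definition twins :: "'a \<Rightarrow> 'a set" where
  "twins x = {y \<in> V. cnbhd y = cnbhd x}"

lemma finite_V: "finite V"
  using simple by (simp add: simple_graph_def)

lemma edge_in_V:
  assumes "E x y"
  shows "x \<in> V" "y \<in> V"
  using assms simple by (simp_all add: simple_graph_def)

lemma edge_sym: "E x y \<Longrightarrow> E y x"
  using simple by (simp add: simple_graph_def)

lemma edge_irrefl [simp]: "\<not> E x x"
  using simple by (simp add: simple_graph_def)

lemma mem_nbhd [simp]: "y \<in> nbhd x \<longleftrightarrow> E x y"
  using edge_in_V by (auto simp: nbhd_def)

lemma mem_cnbhd [simp]: "y \<in> cnbhd x \<longleftrightarrow> y = x \<or> E x y"
  by (simp add: cnbhd_def)

lemma mem_cnbhd_commute: "y \<in> cnbhd x \<longleftrightarrow> x \<in> cnbhd y"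
  using edge_sym by auto

lemma nbhd_subset: "nbhd x \<subseteq> V"
  by (auto simp: nbhd_def)

lemma cnbhd_subset: "x \<in> V \<Longrightarrow> cnbhd x \<subseteq> V"
  by (auto simp: cnbhd_def nbhd_def)

lemma finite_nbhd [simp]: "finite (nbhd x)"
  using finite_subset[OF nbhd_subset finite_V] .

lemma finite_cnbhd [simp]: "finite (cnbhd x)"
  by (simp add: cnbhd_def)

lemma card_cnbhd_eq: "card (cnbhd x) = Suc (card (nbhd x))"
  by (simp add: cnbhd_def)

lemma finite_twins [simp]: "finite (twins x)"
  using finite_V by (simp add: twins_def)

lemma twins_subset_cnbhd: "twins x \<subseteq> cnbhd x"
proof
  fix y assume "y \<in> twins x"
  then have "cnbhd y = cnbhd x"
    by (simp add: twins_def)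
  then show "y \<in> cnbhd x"
    by (metis cnbhd_def insertI1)
qed

lemma self_in_twins: "x \<in> V \<Longrightarrow> x \<in> twins x"
  by (simp add: twins_def)

lemma twins_subset_nbhd:
  assumes "w \<in> cnbhd c - twins c"
  shows "twins c \<subseteq> nbhd w"
proof
  fix c' assume "c' \<in> twins c"
  then have "w \<in> cnbhd c'" "w \<noteq> c'"
    using assms by (auto simp: twins_def)
  then show "c' \<in> nbhd w"
    using edge_sym by auto
qed

lemma twins_subset_cnbhd_diff:
  assumes "w \<in> cnbhd c - twins c" "y \<notin> cnbhd c"
  shows "twins c \<subseteq> cnbhd w - cnbhd y"
proof
  fix c' assume c': "c' \<in> twins c"
  then have "c' \<in> cnbhd w"
    using twins_subset_nbhd[OF assms(1)] by (auto simp: cnbhd_def)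
  moreover have "c' \<notin> cnbhd y"
    using c' assms(2) mem_cnbhd_commute[of c' y] by (auto simp: twins_def)
  ultimately show "c' \<in> cnbhd w - cnbhd y"
    by simp
qed

lemma degree_eq_card_nbhd: "degree V E x = card (nbhd x)"
  by (simp add: degree_def nbhd_def)

lemma triangle_through_vertex:
  assumes "T \<in> triangles V E" "v \<in> T"
  obtains a b where "T = {v, a, b}" "E v a" "E v b" "E a b"
proof -
  have T: "card T = 3" "\<forall>x\<in>T. \<forall>y\<in>T. x \<noteq> y \<longrightarrow> E x y"
    using assms(1) by (auto simp: triangles_def)
  have "card (T - {v}) = 2"
    using T assms(2) by (simp add: card_Diff_singleton)
  then obtain a b where ab: "T - {v} = {a, b}" "a \<noteq> b"
    by (auto simp: card_2_iff)
  then have "T = {v, a, b}" "a \<in> T" "b \<in> T" "a \<noteq> v" "b \<noteq> v"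
    using assms(2) by auto
  with T ab that show ?thesis
    by (metis insertCI)
qed

lemma triangle_insert:
  assumes "E v a" "E v b" "E a b"
  shows "{v, a, b} \<in> triangles V E"
proof -
  have "v \<noteq> a" "v \<noteq> b" "a \<noteq> b"
    using assms edge_irrefl by metis+
  then show ?thesis
    using assms edge_in_V edge_sym by (auto simp: triangles_def)
qed

lemma card_triangle_ordered_pairs:
  assumes "T \<in> triangles V E" "v \<in> T"
  shows "card {(a, b). E v a \<and> E v b \<and> E a b \<and> {v, a, b} = T} = 2"
proof -
  obtain a b where T: "T = {v, a, b}" "E v a" "E v b" "E a b"
    using assms by (rule triangle_through_vertex)
  have ne: "a \<noteq> v" "b \<noteq> v" "a \<noteq> b"
    using T edge_irrefl by metis+
  have "{(x, y). E v x \<and> E v y \<and> E x y \<and> {v, x, y} = T} = {(a, b), (b, a)}"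
  proof (intro equalityI subsetI)
    fix p assume "p \<in> {(x, y). E v x \<and> E v y \<and> E x y \<and> {v, x, y} = T}"
    then obtain x y where "p = (x, y)" "E v x" "E v y" "E x y" "{v, x, y} = T"
      by blast
    moreover have "x \<noteq> v" "y \<noteq> v" "x \<noteq> y"
      using calculation edge_irrefl by metis+
    ultimately show "p \<in> {(a, b), (b, a)}"
      using T(1) ne by (auto simp: doubleton_eq_iff insert_eq_iff)
  qed (use T edge_sym in auto)
  then show ?thesis
    using ne by simp
qed

lemma k3_degree_double_count:
  assumes "v \<in> V"
  shows "2 * k3_degree V E v = (\<Sum>u\<in>nbhd v. card (nbhd v \<inter> nbhd u))"
proof -
  define P where "P = (SIGMA u:nbhd v. nbhd v \<inter> nbhd u)"
  define Tv where "Tv = {T \<in> triangles V E. v \<in> T}"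
  define g where "g = (\<lambda>(a, b). {v, a, b})"
  have "finite Tv"
    using finite_V by (auto simp: Tv_def triangles_def intro: finite_subset[of _ "Pow V"])
  moreover have "g ` P \<subseteq> Tv"
    using triangle_insert by (auto simp: P_def Tv_def g_def)
  moreover have "card {p \<in> P. g p = T} = 2" if "T \<in> Tv" for T
  proof -
    have "{p \<in> P. g p = T} = {(a, b). E v a \<and> E v b \<and> E a b \<and> {v, a, b} = T}"
      by (auto simp: P_def g_def)
    then show ?thesis
      using that card_triangle_ordered_pairs by (simp add: Tv_def)
  qed
  moreover have "finite P"
    by (simp add: P_def)
  ultimately have "card P = 2 * card Tv"
    using sum.group[of P Tv g "\<lambda>_. 1::nat"] by simp
  then show ?thesis
    by (simp add: P_def Tv_def k3_degree_def)
qed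

end

text \<open>K(2r) minus the perfect matching {{x, q x}}: Turan(2r, r) with parts {x, q x}.\<close>

definition cocktail_party :: "'a set \<Rightarrow> ('a \<Rightarrow> 'a \<Rightarrow> bool) \<Rightarrow> ('a \<Rightarrow> 'a) \<Rightarrow> bool" where
  "cocktail_party V E q \<longleftrightarrow>
     (\<forall>x\<in>V. q x \<in> V \<and> q x \<noteq> x \<and> q (q x) = x)
     \<and> (\<forall>x y. E x y \<longleftrightarrow> x \<in> V \<and> y \<in> V \<and> x \<noteq> y \<and> y \<noteq> q x)"

locale regular_sgraph = sgraph +
  fixes d :: nat
  assumes card_nbhd: "x \<in> V \<Longrightarrow> card (nbhd x) = d"
begin

lemma card_cnbhd: "x \<in> V \<Longrightarrow> card (cnbhd x) = Suc d"
  by (simp add: card_cnbhd_eq card_nbhd)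

lemma card_cnbhd_diff_commute:
  assumes "x \<in> V" "y \<in> V"
  shows "card (cnbhd x - cnbhd y) = card (cnbhd y - cnbhd x)"
  using assms by (simp add: card_Diff_subset_Int card_cnbhd Int_commute)

lemma cnbhd_eq_if_subset:
  assumes "x \<in> V" "y \<in> V" "cnbhd x \<subseteq> cnbhd y"
  shows "cnbhd x = cnbhd y"
  using assms by (simp add: card_subset_eq card_cnbhd)

lemma nbhd_eq_if_subset_cnbhd:
  assumes "v \<in> V" "w \<in> V" "w \<notin> cnbhd v" "nbhd v \<subseteq> cnbhd w"
  shows "nbhd w = nbhd v"
proof -
  have "nbhd v \<subseteq> nbhd w"
    using assms(3,4) by auto
  then show ?thesis
    using assms(1,2) card_nbhd by (metis card_subset_eq finite_nbhd)
qed

lemma card_nbhd_split: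
  assumes "E v u"
  shows "card (nbhd u) = Suc (card (nbhd v \<inter> nbhd u) + card (cnbhd u - cnbhd v))"
proof -
  let ?A = "nbhd v \<inter> nbhd u" and ?B = "cnbhd u - cnbhd v"
  have "nbhd u = insert v (?A \<union> ?B)"
    using assms edge_sym edge_in_V by auto
  moreover have "card (insert v (?A \<union> ?B)) = Suc (card (?A \<union> ?B))"
    by (rule card_insert_disjoint) auto
  moreover have "card (?A \<union> ?B) = card ?A + card ?B"
    by (rule card_Un_disjoint) auto
  ultimately show ?thesis
    by simp
qed

lemma sum_card_cnbhd_diff:
  assumes "v \<in> V"
  shows "(\<Sum>u\<in>nbhd v. card (cnbhd v - cnbhd u)) + 2 * k3_degree V E v = d * (d - 1)"
proof -
  have "card (cnbhd v - cnbhd u) + card (nbhd v \<inter> nbhd u) = d - 1" if "u \<in> nbhd v" for u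
    using that card_nbhd_split[of v u] card_nbhd[of u] card_cnbhd_diff_commute[of u v]
      edge_in_V assms by simp
  then have "(\<Sum>u\<in>nbhd v. card (cnbhd v - cnbhd u) + card (nbhd v \<inter> nbhd u)) = d * (d - 1)"
    using card_nbhd[OF assms] by simp
  then show ?thesis
    by (simp add: sum.distrib k3_degree_double_count[OF assms])
qed

lemma card_le_sum_cnbhd_diff:
  assumes w: "w \<in> V" and R: "R \<subseteq> nbhd w"
  shows "card R \<le> (\<Sum>z\<in>R. card (cnbhd w - cnbhd z)) + (card (twins w) - 1)"
proof -
  have fin: "finite R"
    using R finite_nbhd by (rule finite_subset)
  have "card (R \<inter> twins w) \<le> card (twins w - {w})"
    using R by (intro card_mono) auto
  also have "\<dots> = card (twins w) - 1"
    using w self_in_twins by simp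
  finally have twins_in_R: "card (R \<inter> twins w) \<le> card (twins w) - 1" .
  have "1 \<le> card (cnbhd w - cnbhd z)" if z: "z \<in> R - twins w" for z
  proof -
    have "z \<in> V"
      using z R nbhd_subset by blast
    with z w have "\<not> cnbhd w \<subseteq> cnbhd z"
      using cnbhd_eq_if_subset by (auto simp: twins_def)
    then show ?thesis
      by (simp add: Suc_le_eq card_gt_0_iff)
  qed
  then have "(\<Sum>z\<in>R - twins w. 1) \<le> (\<Sum>z\<in>R - twins w. card (cnbhd w - cnbhd z))"
    by (rule sum_mono)
  then have "card (R - twins w) \<le> (\<Sum>z\<in>R - twins w. card (cnbhd w - cnbhd z))"
    by simp
  also have "\<dots> \<le> (\<Sum>z\<in>R. card (cnbhd w - cnbhd z))"
    using fin by (intro sum_mono2) auto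
  finally have "card (R - twins w) \<le> (\<Sum>z\<in>R. card (cnbhd w - cnbhd z))" .
  then show ?thesis
    using twins_in_R card_Int_Diff[OF fin, of "twins w"] by linarith
qed

lemma k3_degree_eq_iff_excess:
  assumes v: "v \<in> V" and d: "d = 2 * m"
  shows "k3_degree V E v = 4 * (m choose 2)
    \<longleftrightarrow> (\<Sum>u\<in>nbhd v. card (cnbhd v - cnbhd u)) = d"
proof -
  have "d * (d - 1) = 2 * (2 * (m * (m - 1))) + d"
    using d by (cases m) (simp_all add: algebra_simps)
  then show ?thesis
    using sum_card_cnbhd_diff[OF v] unfolding four_choose_two by (intro iffI) linarith+
qed

lemma cocktail_party_if_card_V:
  assumes "card V = d + 2"
  shows "\<exists>q. cocktail_party V E q"
proof -
  define q where "q x = (THE y. y \<in> V - cnbhd x)" for x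
  have antipode: "V - cnbhd x = {q x}" if "x \<in> V" for x
  proof -
    have "card (V - cnbhd x) = 1"
      using that assms cnbhd_subset by (simp add: card_Diff_subset card_cnbhd)
    then obtain a where "V - cnbhd x = {a}"
      by (auto simp: card_1_singleton_iff)
    then show ?thesis
      by (simp add: q_def)
  qed
  have "q x \<in> V" "q x \<noteq> x" "q (q x) = x" if x: "x \<in> V" for x
  proof -
    show "q x \<in> V" "q x \<noteq> x"
      using antipode[OF x] by auto
    then have "x \<in> V - cnbhd (q x)"
      using x antipode[OF x] mem_cnbhd_commute[of x "q x"] by auto
    then show "q (q x) = x"
      using antipode[OF \<open>q x \<in> V\<close>] by simp
  qed
  moreover have "E x y \<longleftrightarrow> x \<in> V \<and> y \<in> V \<and> x \<noteq> y \<and> y \<noteq> q x" for x y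
  proof (cases "x \<in> V")
    case True
    then show ?thesis
      using antipode[OF True, THEN eqset_imp_iff, of y] edge_in_V by auto
  qed (use edge_in_V in blast)
  ultimately show ?thesis
    unfolding cocktail_party_def by blast
qed

end

locale unit_excess_graph = regular_sgraph +
  assumes excess: "v \<in> V \<Longrightarrow> (\<Sum>u\<in>nbhd v. card (cnbhd v - cnbhd u)) = d"

lemma (in unit_excess_graph) has_parameters:
  assumes "d = 2 * m"
  shows "has_parameters V E d (4 * (m choose 2))"
  using k3_degree_eq_iff_excess[OF _ assms] excess card_nbhd
  by (simp add: has_parameters_def degree_eq_card_nbhd)

lemma unit_excess_graph_if_has_parameters:
  assumes "simple_graph V E" "has_parameters V E (2 * m) (4 * (m choose 2))"
  shows "unit_excess_graph V E (2 * m)"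
proof -
  interpret sgraph V E
    using assms(1) by unfold_locales
  interpret regular_sgraph V E "2 * m"
    using assms(2) by unfold_locales (simp add: has_parameters_def degree_eq_card_nbhd)
  show ?thesis
    using assms(2) k3_degree_eq_iff_excess by unfold_locales (simp add: has_parameters_def)
qed

context unit_excess_graph
begin

text \<open>With K the twin class of c, k = |K| and t = |N[w] - N[c]|, split
  N(w) = K \<union> (N(w) - N[c]) \<union> R. The excesses at w are t on K, at least k on the t
  vertices outside N[c], and at least |R| - (k - 1) in total on R; as they sum to
  d = k + t + |R|, we get 2kt + 1 \<le> 2k + t, hence t \<le> 1.\<close>

lemma card_cnbhd_diff_le_1_if_max_twins:
  assumes c: "c \<in> V" and max: "\<And>z. z \<in> V \<Longrightarrow> card (twins z) \<le> card (twins c)"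
    and two: "2 \<le> card (twins c)" and w: "w \<in> cnbhd c - twins c"
  shows "card (cnbhd w - cnbhd c) \<le> 1"
proof -
  define K where "K = twins c"
  define Y where "Y = nbhd w - cnbhd c"
  define R where "R = nbhd w \<inter> cnbhd c - K"
  define f where "f z = card (cnbhd w - cnbhd z)" for z
  define t where "t = card (cnbhd w - cnbhd c)"
  have wV: "w \<in> V"
    using w c cnbhd_subset by blast
  have K_nbhd: "K \<subseteq> nbhd w"
    using twins_subset_nbhd[OF w] by (simp add: K_def)
  have nbhd_w: "nbhd w = K \<union> Y \<union> R" and disj: "K \<inter> Y = {}" "(K \<union> Y) \<inter> R = {}"
    using K_nbhd twins_subset_cnbhd[of c] by (auto simp: Y_def R_def K_def)
  have fin: "finite K" "finite Y" "finite R"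
    using K_nbhd by (auto simp: Y_def R_def intro: finite_subset)
  have card_Y: "card Y = t"
    using w by (auto simp: Y_def t_def intro: arg_cong[where f = card])
  have "card K + card Y + card R = d"
    using card_nbhd[OF wV] nbhd_w disj fin by (simp add: card_Un_disjoint)
  moreover have "sum f K + sum f Y + sum f R = d"
    using excess[OF wV] nbhd_w disj fin by (simp add: f_def sum.union_disjoint)
  moreover have "sum f K = card K * t"
    by (simp add: f_def t_def K_def twins_def)
  moreover have "card Y * card K \<le> sum f Y"
  proof -
    have "card K \<le> f y" if "y \<in> Y" for y
      using that twins_subset_cnbhd_diff[OF w] by (simp add: f_def K_def Y_def card_mono)
    then show ?thesis
      using sum_mono[of Y "\<lambda>_. card K" f] by simp
  qed
  moreover have "card R \<le> sum f R + (card K - 1)"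
  proof -
    have "R \<subseteq> nbhd w"
      by (auto simp: R_def)
    then show ?thesis
      using card_le_sum_cnbhd_diff[OF wV, of R] max[OF wV] by (simp add: f_def K_def)
  qed
  moreover have "2 \<le> card K"
    using two by (simp add: K_def)
  ultimately have "2 * (card K * t) + 1 \<le> 2 * card K + t"
    unfolding card_Y by (simp add: mult.commute)
  then show ?thesis
    using le_1_if_double_mult_le \<open>2 \<le> card K\<close> by (simp add: t_def)
qed

text \<open>Otherwise a largest twin class, of size k \<ge> 2 and with element c, would make the
  excess at c at most |N[c] - K| = d + 1 - k < d.\<close>

lemma inj_on_cnbhd: "inj_on cnbhd V"
proof (rule inj_onI, rule ccontr)
  fix x y assume xy: "x \<in> V" "y \<in> V" "cnbhd x = cnbhd y" "x \<noteq> y"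
  have "card (twins z) < Suc (card V)" for z
    using card_mono[OF finite_V, of "twins z"] by (auto simp: twins_def)
  then have "\<exists>c. c \<in> V \<and> (\<forall>z. z \<in> V \<longrightarrow> card (twins z) \<le> card (twins c))"
    using xy(1) by (intro Lattices_Big.ex_has_greatest_nat) auto
  then obtain c where c: "c \<in> V" and max: "\<And>z. z \<in> V \<Longrightarrow> card (twins z) \<le> card (twins c)"
    by blast
  have "card {x, y} \<le> card (twins x)"
    using xy by (intro card_mono finite_twins) (auto simp: twins_def)
  then have two: "2 \<le> card (twins c)"
    using max[OF xy(1)] xy(4) by simp
  have nbhd_c: "nbhd c = (twins c - {c}) \<union> (cnbhd c - twins c)"
    using twins_subset_cnbhd[of c] self_in_twins[OF c] by (auto simp: cnbhd_def)
  have "d = (\<Sum>z\<in>nbhd c. card (cnbhd c - cnbhd z))"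
    using excess[OF c] by simp
  also have "\<dots> = (\<Sum>z\<in>cnbhd c - twins c. card (cnbhd c - cnbhd z))"
  proof -
    have "(\<Sum>z\<in>twins c - {c}. card (cnbhd c - cnbhd z)) = 0"
      by (intro sum.neutral) (simp add: twins_def)
    then show ?thesis
      unfolding nbhd_c by (subst sum.union_disjoint) auto
  qed
  also have "\<dots> \<le> (\<Sum>z\<in>cnbhd c - twins c. 1)"
  proof (rule sum_mono)
    fix z assume z: "z \<in> cnbhd c - twins c"
    then have "z \<in> V"
      using c cnbhd_subset by blast
    then show "card (cnbhd c - cnbhd z) \<le> 1"
      using card_cnbhd_diff_le_1_if_max_twins[OF c max two z] card_cnbhd_diff_commute c
      by simp
  qed
  also have "\<dots> = Suc d - card (twins c)"
    using twins_subset_cnbhd c by (simp add: card_Diff_subset card_cnbhd)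
  finally show False
    using two card_mono[OF finite_cnbhd twins_subset_cnbhd[of c]] card_cnbhd[OF c] by linarith
qed

lemma card_cnbhd_diff_edge:
  assumes "E u v"
  shows "card (cnbhd u - cnbhd v) = 1"
proof -
  have v: "v \<in> V" and "u \<in> V" and u: "u \<in> nbhd v"
    using assms edge_in_V edge_sym by auto
  have ge1: "1 \<le> card (cnbhd v - cnbhd z)" if "z \<in> nbhd v" for z
  proof -
    have "z \<in> V" "z \<noteq> v"
      using that by (auto dest: edge_in_V)
    then have "cnbhd v \<noteq> cnbhd z"
      using v inj_on_cnbhd by (auto dest: inj_onD)
    then have "\<not> cnbhd v \<subseteq> cnbhd z"
      using v \<open>z \<in> V\<close> cnbhd_eq_if_subset by blast
    then show ?thesis
      by (simp add: Suc_le_eq card_gt_0_iff)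
  qed
  have "card (cnbhd v - cnbhd u) \<le> 1"
  proof (rule ccontr)
    assume "\<not> ?thesis"
    with u have "\<exists>z\<in>nbhd v. 1 < card (cnbhd v - cnbhd z)"
      by (intro bexI[of _ u]) simp_all
    then have "(\<Sum>z\<in>nbhd v. 1) < (\<Sum>z\<in>nbhd v. card (cnbhd v - cnbhd z))"
      using ge1 by (intro sum_strict_mono_ex1) auto
    then show False
      using excess[OF v] card_nbhd[OF v] by simp
  qed
  then show ?thesis
    using ge1[OF u] card_cnbhd_diff_commute[OF \<open>u \<in> V\<close> v] by simp
qed

lemma cnbhd_diff_eq_singleton:
  assumes "E u v" "w \<in> cnbhd u - cnbhd v"
  shows "cnbhd u - cnbhd v = {w}"
  using assms by (simp add: card_1_eq_singleton card_cnbhd_diff_edge)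

lemma ex_cnbhd_diff_eq_singleton:
  assumes "E u v"
  obtains w where "cnbhd u - cnbhd v = {w}"
  using card_cnbhd_diff_edge[OF assms] by (auto simp: card_1_singleton_iff)

lemma cnbhd_diff_swap:
  assumes "E v u" "cnbhd v - cnbhd u = {p}"
  shows "E v p" "cnbhd v - cnbhd p = {u}"
proof -
  have "p \<in> cnbhd v" "p \<notin> cnbhd u" "v \<in> cnbhd u"
    using assms edge_sym by auto
  then show "E v p"
    by auto
  have "u \<in> cnbhd v - cnbhd p"
    using assms(1) \<open>p \<notin> cnbhd u\<close> mem_cnbhd_commute[of u p] by auto
  with \<open>E v p\<close> show "cnbhd v - cnbhd p = {u}"
    by (rule cnbhd_diff_eq_singleton)
qed

lemma cnbhd_minus_subset_cnbhd:
  assumes "E u v" "w \<in> cnbhd u - cnbhd v"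
  shows "cnbhd u - {v} \<subseteq> cnbhd w"
proof -
  have "w \<noteq> u"
    using assms edge_sym by auto
  then have "E u w"
    using assms(2) by simp
  moreover have "v \<in> cnbhd u - cnbhd w"
    using assms mem_cnbhd_commute[of v w] by auto
  ultimately have "cnbhd u - cnbhd w = {v}"
    by (rule cnbhd_diff_eq_singleton)
  then show ?thesis
    by blast
qed

lemma cnbhd_minus_partner_subset:
  assumes "E v u" "cnbhd u - cnbhd v = {w}" "cnbhd v - cnbhd u = {p}"
  shows "cnbhd v - {p, v} \<subseteq> cnbhd w"
  using cnbhd_minus_subset_cnbhd[OF edge_sym[OF assms(1)], of w] assms(2,3) by auto

text \<open>Take u in N(v) with N[u] - N[v] = {w} and N[v] - N[u] = {p}, and let
  N[p] - N[v] = {w'}. Then w is adjacent to N(v) - {p} and w' to N(v) - {u}; a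
  third neighbour z of v has both w and w' in the singleton N[z] - N[v].\<close>

lemma exists_antipode:
  assumes d: "3 \<le> d" and v: "v \<in> V"
  obtains w where "w \<in> V" "w \<notin> cnbhd v" "nbhd w = nbhd v"
proof -
  have "nbhd v \<noteq> {}"
    using card_nbhd[OF v] d by auto
  then obtain u where u: "E v u"
    by auto
  obtain w where w: "cnbhd u - cnbhd v = {w}"
    using ex_cnbhd_diff_eq_singleton[OF edge_sym[OF u]] .
  obtain p where p: "cnbhd v - cnbhd u = {p}"
    using ex_cnbhd_diff_eq_singleton[OF u] .
  note p_swap = cnbhd_diff_swap[OF u p]
  obtain w' where w': "cnbhd p - cnbhd v = {w'}"
    using ex_cnbhd_diff_eq_singleton[OF edge_sym[OF p_swap(1)]] .
  have "card {u, p} < card (nbhd v)"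
    using card_nbhd[OF v] d by (simp add: card_insert_if)
  then have "\<not> nbhd v \<subseteq> {u, p}"
    using card_mono[of "{u, p}" "nbhd v"] by auto
  then obtain z where "z \<in> nbhd v" "z \<noteq> u" "z \<noteq> p"
    by blast
  then have "w \<in> cnbhd z - cnbhd v" "w' \<in> cnbhd z - cnbhd v" "E z v"
    using cnbhd_minus_partner_subset[OF u w p] cnbhd_minus_partner_subset[OF p_swap(1) w' p_swap(2)]
      w w' mem_cnbhd_commute[of z] edge_sym by auto
  then have "w' = w"
    using cnbhd_diff_eq_singleton by blast
  have "u \<noteq> p"
    using p by auto
  have "nbhd v \<subseteq> cnbhd w"
  proof
    fix x assume "x \<in> nbhd v"
    with \<open>u \<noteq> p\<close> have "x \<in> cnbhd v - {p, v} \<or> x \<in> cnbhd v - {u, v}"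
      by auto
    then show "x \<in> cnbhd w"
      using cnbhd_minus_partner_subset[OF u w p] \<open>w' = w\<close>
        cnbhd_minus_partner_subset[OF p_swap(1) w' p_swap(2)] by blast
  qed
  moreover have "w \<notin> cnbhd v" "w \<in> V"
    using w cnbhd_subset edge_in_V(2)[OF u] by auto
  ultimately show thesis
    using that nbhd_eq_if_subset_cnbhd[OF v] by blast
qed

lemma insert_antipode_closed:
  assumes w: "w \<notin> cnbhd v" "nbhd w = nbhd v"
    and x: "x \<in> insert w (cnbhd v)" and xy: "E x y"
  shows "y \<in> insert w (cnbhd v)"
proof -
  consider "x = w" | "x = v" | "E v x"
    using x by auto
  then show ?thesis
  proof cases
    case 1
    with xy have "y \<in> nbhd w"
      by simp
    then show ?thesis
      using w(2) by simp
  next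
    case 2
    then show ?thesis
      using xy by simp
  next
    case 3
    then have "x \<in> nbhd w"
      using w(2) by simp
    then have "w \<in> cnbhd x - cnbhd v"
      using w(1) mem_cnbhd_commute[of x w] by simp
    then have "cnbhd x - cnbhd v = {w}"
      by (rule cnbhd_diff_eq_singleton[OF edge_sym[OF 3]])
    moreover have "y \<in> cnbhd x"
      using xy by simp
    ultimately show ?thesis
      by blast
  qed
qed

lemma V_eq_insert_antipode:
  assumes conn: "connected_graph V E" and v: "v \<in> V"
    and w: "w \<in> V" "w \<notin> cnbhd v" "nbhd w = nbhd v"
  shows "V = insert w (cnbhd v)"
proof -
  have "y \<in> insert w (cnbhd v)" if "E\<^sup>*\<^sup>* v y" for y
    using that
  proof (induction rule: rtranclp_induct)
    case (step y z)
    from w(2,3) step.IH step.hyps(2) show ?case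
      by (rule insert_antipode_closed)
  qed simp
  then show ?thesis
    using conn v w(1) cnbhd_subset[OF v] unfolding connected_graph_def by blast
qed

lemma card_V_if_connected:
  assumes conn: "connected_graph V E" and d: "3 \<le> d"
  shows "card V = d + 2"
proof -
  obtain v where v: "v \<in> V"
    using conn by (auto simp: connected_graph_def)
  obtain w where w: "w \<in> V" "w \<notin> cnbhd v" "nbhd w = nbhd v"
    using exists_antipode[OF d v] .
  then have "card V = card (insert w (cnbhd v))"
    using V_eq_insert_antipode[OF conn v] by (metis (full_types))
  also have "\<dots> = d + 2"
    using w(2) card_cnbhd[OF v] by simp
  finally show ?thesis .
qed

end

lemma cocktail_party_simple_graph:
  assumes "finite V" "cocktail_party V E q"
  shows "simple_graph V E"
  using assms unfolding cocktail_party_def simple_graph_def by metis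

lemma (in sgraph) cnbhd_cocktail_party:
  assumes "cocktail_party V E q" "x \<in> V"
  shows "cnbhd x = V - {q x}"
  using assms unfolding cocktail_party_def by auto

lemma cocktail_party_unit_excess:
  assumes fin: "finite V" and cp: "cocktail_party V E q" and card: "card V = d + 2"
  shows "unit_excess_graph V E d"
proof -
  have q: "q x \<in> V" "q x \<noteq> x" "q (q x) = x" if "x \<in> V" for x
    using cp that by (auto simp: cocktail_party_def)
  interpret sgraph V E
    using cocktail_party_simple_graph[OF fin cp] by unfold_locales
  have cnbhd: "cnbhd x = V - {q x}" if "x \<in> V" for x
    using cnbhd_cocktail_party[OF cp that] .
  have card_nbhd: "card (nbhd x) = d" if x: "x \<in> V" for x
    using card_cnbhd_eq[of x] cnbhd[OF x] q[OF x] card fin by simp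
  interpret regular_sgraph V E d
    by unfold_locales (rule card_nbhd)
  have "card (cnbhd v - cnbhd u) = 1" if "v \<in> V" "u \<in> nbhd v" for u v
  proof -
    have u: "u \<in> V" "u \<noteq> v"
      using that by (auto dest: edge_in_V)
    then have "q u \<noteq> q v"
      using q that(1) by metis
    then have "cnbhd v - cnbhd u = {q u}"
      using cnbhd[OF that(1)] cnbhd[OF u(1)] q(1)[OF u(1)] by auto
    then show ?thesis
      by simp
  qed
  then show ?thesis
    by unfold_locales (simp add: card_nbhd)
qed

lemma cocktail_party_connected:
  assumes fin: "finite V" and cp: "cocktail_party V E q" and card: "2 < card V"
  shows "connected_graph V E"
proof -
  have q: "q x \<in> V" "q x \<noteq> x" "q (q x) = x" if "x \<in> V" for x
    using cp that by (auto simp: cocktail_party_def)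
  have E: "E x y \<longleftrightarrow> x \<in> V \<and> y \<in> V \<and> x \<noteq> y \<and> y \<noteq> q x" for x y
    using cp by (simp add: cocktail_party_def)
  have "E\<^sup>*\<^sup>* x y" if x: "x \<in> V" and y: "y \<in> V" for x y
  proof (cases "y = q x")
    case True
    have "card {x, q x} < card V"
      using card by (simp add: card_insert_if)
    then have "\<not> V \<subseteq> {x, q x}"
      using card_mono[of "{x, q x}" V] by auto
    then obtain z where z: "z \<in> V" "z \<noteq> x" "z \<noteq> q x"
      by blast
    then have "q z \<noteq> q x"
      using q x by metis
    then have "E x z" "E z y"
      using E x y z q True by auto
    then show ?thesis
      by (meson converse_rtranclp_into_rtranclp r_into_rtranclp)
  next
    case False
    then show ?thesis
      using E x y by (cases "x = y") auto
  qed
  moreover have "V \<noteq> {}"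
    using card by auto
  ultimately show ?thesis
    by (simp add: connected_graph_def)
qed

lemma involution_transversal:
  assumes fin: "finite V" and q: "\<And>x. x \<in> V \<Longrightarrow> q x \<in> V \<and> q x \<noteq> x \<and> q (q x) = x"
  obtains R where "R \<subseteq> V" "\<And>x. x \<in> V \<Longrightarrow> x \<in> R \<longleftrightarrow> q x \<notin> R"
proof -
  obtain g :: "'a \<Rightarrow> nat" where g: "inj_on g V"
    using finite_imp_inj_to_nat_seg[OF fin] by blast
  define R where "R = {x \<in> V. g x < g (q x)}"
  have "x \<in> R \<longleftrightarrow> q x \<notin> R" if "x \<in> V" for x
    using that q[OF that] inj_on_eq_iff[OF g, of x "q x"] by (auto simp: R_def)
  then show thesis
    by (rule that[rotated]) (auto simp: R_def)
qed

lemma card_involution_transversal: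
  assumes fin: "finite V" and q: "\<And>x. x \<in> V \<Longrightarrow> q x \<in> V \<and> q x \<noteq> x \<and> q (q x) = x"
    and R: "R \<subseteq> V" "\<And>x. x \<in> V \<Longrightarrow> x \<in> R \<longleftrightarrow> q x \<notin> R"
  shows "card V = 2 * card R"
proof -
  have "V = R \<union> q ` R"
  proof
    show "V \<subseteq> R \<union> q ` R"
      using q R(2) by (metis Un_iff image_eqI subsetI)
  qed (use q R in auto)
  moreover have "R \<inter> q ` R = {}"
    using R by auto
  moreover have "inj_on q R"
    using q R(1) by (metis inj_onI subsetD)
  moreover have "finite R"
    using R(1) fin by (rule finite_subset)
  ultimately show ?thesis
    by (simp add: card_Un_disjoint card_image)
qed

lemma transversal_rep_eq_iff:
  assumes q: "\<And>x. x \<in> V \<Longrightarrow> q x \<in> V \<and> q x \<noteq> x \<and> q (q x) = x"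
    and R: "\<And>x. x \<in> V \<Longrightarrow> x \<in> R \<longleftrightarrow> q x \<notin> R" and x: "x \<in> V" and y: "y \<in> V"
  shows "(if x \<in> R then x else q x) = (if y \<in> R then y else q y) \<longleftrightarrow> y = x \<or> y = q x"
proof -
  have "x \<in> R \<and> q x \<notin> R \<or> x \<notin> R \<and> q x \<in> R" "y \<in> R \<and> q y \<notin> R \<or> y \<notin> R \<and> q y \<in> R"
    using R[OF x] R[OF y] by blast+
  then show ?thesis
    using q[OF x] q[OF y] by (cases "x \<in> R"; cases "y \<in> R") (simp_all, metis+)
qed

text \<open>Label one vertex of each pair {x, q x} by i < r and its partner by i + r.\<close>

lemma involution_labelling:
  assumes fin: "finite V" and q: "\<And>x. x \<in> V \<Longrightarrow> q x \<in> V \<and> q x \<noteq> x \<and> q (q x) = x"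
    and card: "card V = 2 * r"
  obtains f where "bij_betw f V {0..<2 * r}"
    "\<And>x y. x \<in> V \<Longrightarrow> y \<in> V \<Longrightarrow> f x mod r = f y mod r \<longleftrightarrow> y = x \<or> y = q x"
proof -
  obtain R where R: "R \<subseteq> V" "\<And>x. x \<in> V \<Longrightarrow> x \<in> R \<longleftrightarrow> q x \<notin> R"
    using involution_transversal[OF fin q] by blast
  have "card R = r"
    using card_involution_transversal[OF fin q R] card by simp
  then obtain h where h: "bij_betw h R {0..<r}"
    using ex_bij_betw_finite_nat[OF finite_subset[OF R(1) fin]] by auto
  define rep where "rep x = (if x \<in> R then x else q x)" for x
  define f where "f x = h (rep x) + r * (if x \<in> R then 0 else 1)" for x
  have rep: "rep x \<in> R" if "x \<in> V" for x
    using R(2)[OF that] by (cases "x \<in> R") (simp_all add: rep_def)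
  have rep_eq: "h (rep x) = h (rep y) \<longleftrightarrow> y = x \<or> y = q x" if x: "x \<in> V" and y: "y \<in> V" for x y
    using inj_on_eq_iff[OF bij_betw_imp_inj_on[OF h] rep[OF x] rep[OF y]]
      transversal_rep_eq_iff[OF q R(2) x y] by (simp add: rep_def)
  have h_lt: "h (rep x) < r" if "x \<in> V" for x
    using bij_betw_apply[OF h rep[OF that]] by simp
  then have f_mod: "f x mod r = h (rep x)" "f x div r = (if x \<in> R then 0 else 1)"
    and f_lt: "f x < 2 * r" if "x \<in> V" for x
    using h_lt[OF that] by (auto simp: f_def div_add_self2)
  have "inj_on f V"
  proof (rule inj_onI)
    fix x y assume x: "x \<in> V" and y: "y \<in> V" and fxy: "f x = f y"
    then have "y = x \<or> y = q x"
      using f_mod(1)[OF x] f_mod(1)[OF y] rep_eq[OF x y] by simp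
    moreover have "(if x \<in> R then 0 else 1 :: nat) = (if y \<in> R then 0 else 1)"
      using f_mod(2)[OF x] f_mod(2)[OF y] fxy by metis
    then have "x \<in> R \<longleftrightarrow> y \<in> R"
      by (simp split: if_splits)
    ultimately show "x = y"
      using R(2)[OF x] by blast
  qed
  moreover have "f ` V = {0..<2 * r}"
    using f_lt calculation card fin by (intro card_subset_eq) (auto simp: card_image)
  ultimately show thesis
    using that f_mod(1) rep_eq by (simp add: bij_betw_def)
qed

lemma cocktail_party_iso_turan:
  assumes fin: "finite V" and cp: "cocktail_party V E q" and card: "card V = 2 * r"
  shows "graph_iso V E {0..<2 * r} (turan_E (2 * r) r)"
proof -
  have q: "q x \<in> V \<and> q x \<noteq> x \<and> q (q x) = x" if "x \<in> V" for x
    using cp that by (auto simp: cocktail_party_def)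
  obtain f where f: "bij_betw f V {0..<2 * r}"
    and f_mod: "\<And>x y. x \<in> V \<Longrightarrow> y \<in> V \<Longrightarrow> f x mod r = f y mod r \<longleftrightarrow> y = x \<or> y = q x"
    using involution_labelling[OF fin q card] by blast
  have "E x y \<longleftrightarrow> turan_E (2 * r) r (f x) (f y)" if "x \<in> V" "y \<in> V" for x y
    using that cp f_mod[OF that] bij_betw_apply[OF f] by (auto simp: cocktail_party_def turan_E_def)
  with f show ?thesis
    unfolding graph_iso_def by blast
qed

lemma mod_double_cases:
  fixes x r :: nat
  assumes "x < 2 * r"
  shows "x mod r = (if x < r then x else x - r)"
    and "(x + r) mod (2 * r) = (if x < r then x + r else x - r)"
proof -
  show "x mod r = (if x < r then x else x - r)"
    using assms by (auto simp: le_mod_geq)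
  show "(x + r) mod (2 * r) = (if x < r then x + r else x - r)"
  proof (cases "x < r")
    case False
    then have "(x + r) mod (2 * r) = (x + r - 2 * r) mod (2 * r)"
      using assms by (subst le_mod_geq) auto
    then show ?thesis
      using assms False by simp
  qed simp
qed

lemma cocktail_party_turan:
  assumes "0 < r"
  shows "cocktail_party (turan_V (2 * r) r) (turan_E (2 * r) r) (\<lambda>i. (i + r) mod (2 * r))"
  unfolding cocktail_party_def turan_V_def
proof (intro conjI allI ballI)
  fix x assume "x \<in> {0..<2 * r}"
  then have x: "x < 2 * r"
    by simp
  show "(x + r) mod (2 * r) \<in> {0..<2 * r}"
    using assms by simp
  show "(x + r) mod (2 * r) \<noteq> x"
    using mod_double_cases[OF x] assms by auto
  show "((x + r) mod (2 * r) + r) mod (2 * r) = x"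
    using mod_double_cases[OF x] mod_double_cases(2)[of "(x + r) mod (2 * r)" r] assms x by auto
next
  fix x y
  show "turan_E (2 * r) r x y
    \<longleftrightarrow> x \<in> {0..<2 * r} \<and> y \<in> {0..<2 * r} \<and> x \<noteq> y \<and> y \<noteq> (x + r) mod (2 * r)"
  proof (cases "x < 2 * r \<and> y < 2 * r")
    case True
    then have "x mod r \<noteq> y mod r \<longleftrightarrow> x \<noteq> y \<and> y \<noteq> (x + r) mod (2 * r)"
      using mod_double_cases[of x r] mod_double_cases[of y r]
      by (cases "x < r"; cases "y < r") (simp_all, linarith+)
    then show ?thesis
      using True by (auto simp: turan_E_def)
  qed (auto simp: turan_E_def)
qed

theorem corollary5p3:
  fixes m :: nat
  assumes "m \<ge> 2"
  shows "simple_graph (turan_V (2*m+2) (m+1)) (turan_E (2*m+2) (m+1))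
       \<and> connected_graph (turan_V (2*m+2) (m+1)) (turan_E (2*m+2) (m+1))
       \<and> has_parameters (turan_V (2*m+2) (m+1)) (turan_E (2*m+2) (m+1)) (2*m) (4 * (m choose 2))
       \<and> (\<forall>(V :: 'a set) E. simple_graph V E \<and> connected_graph V E
            \<and> has_parameters V E (2*m) (4 * (m choose 2))
            \<longrightarrow> graph_iso V E (turan_V (2*m+2) (m+1)) (turan_E (2*m+2) (m+1)))"
proof -
  let ?V = "turan_V (2*m+2) (m+1)" and ?E = "turan_E (2*m+2) (m+1)"
  have fin: "finite ?V" and card: "card ?V = 2*m + 2"
    by (simp_all add: turan_V_def)
  have cp: "cocktail_party ?V ?E (\<lambda>i. (i + (m+1)) mod (2*m+2))"
    using cocktail_party_turan[of "m+1"] by simp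
  interpret turan: unit_excess_graph ?V ?E "2*m"
    using cocktail_party_unit_excess[OF fin cp] card by simp
  have "graph_iso V E ?V ?E"
    if "simple_graph V E" "connected_graph V E" "has_parameters V E (2*m) (4 * (m choose 2))"
    for V :: "'a set" and E
  proof -
    interpret unit_excess_graph V E "2*m"
      using unit_excess_graph_if_has_parameters that(1,3) .
    have "card V = 2*m + 2"
      using card_V_if_connected[OF that(2)] assms by simp
    moreover obtain q where "cocktail_party V E q"
      using cocktail_party_if_card_V calculation by auto
    ultimately show ?thesis
      using cocktail_party_iso_turan[OF finite_V, of E q "m+1"] by (simp add: turan_V_def)
  qed
  then show ?thesis
    using cocktail_party_simple_graph[OF fin cp] cocktail_party_connected[OF fin cp] card
      turan.has_parameters[of m] assms by simp
qed

end
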